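(* Let $V$ be a countable set, $\Omega_0$ a finite set, $\Omega=\Omega_0^V$, $q\in\mathbb N$, and let $\gamma=(\gamma_\Lambda)_{\Lambda\Subset V}$ be a quasilocal $q$-specification. Let $f:\Omega^q\to\mathbb R$ be continuous and $\Lambda\Subset V$. Then the map $$(\eta_1,\dots,\eta_q)\mapsto\gamma^{\otimes q}_\Lambda f(\eta_1,\dots,\eta_q):=\int_{\Omega^q}f(\sigma_1,\dots,\sigma_q)\prod_{i=1}^q\gamma_\Lambda(d\sigma_i\mid\eta_1,\dots,\eta_q)$$ is continuous on $\Omega^q$.
   Context: $\Omega$ carries the product $\sigma$-algebra $\mathcal F$ and the topology of pointwise (coordinatewise) convergence: $\sigma^{(n)}\to\sigma$ iff $\sigma^{(n)}(x)\to\sigma(x)$ for every $x\in V$; $\Omega^q$ carries the product topology, and $f:\Omega^q\to\mathbb R$ is continuous if $f(w^{(n)})\to f(w)$ whenever $w^{(n)}\to w$. For $\Delta\subset V$, $\mathcal F_\Delta$ is the $\sigma$-algebra generated by coordinates in $\Delta$, $\mathcal F^q_{\Lambda^c}=(\mathcal F_{\Lambda^c})^{\otimes q}$. A probability $q$-kernel is a map $\gamma_\Lambda:\mathcal F\times\Omega^q\to[0,1]$ with $\gamma_\Lambda(\cdot\mid\eta_1,\dots,\eta_q)$ a probability measure and $\gamma_\Lambda(A\mid\cdot)$ $\mathcal F^q_{\Lambda^c}$-measurable; proper means $\gamma_\Lambda(A\mid\eta_1,\dots,\eta_q)=\frac1q\sum_i\mathbf 1_A(\eta_i)$ for $A\in\mathcal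 F_{\Lambda^c}$. Composition: $(\gamma_\Delta\gamma_\Lambda)(A\mid\eta)=\int_{\Omega^q}\gamma_\Lambda(A\mid\zeta_1,\dots,\zeta_q)\prod_i\gamma_\Delta(d\zeta_i\mid\eta)$. A $q$-specification is a family of proper probability $q$-kernels $(\gamma_\Lambda)_{\Lambda\Subset V}$ with $\gamma_\Delta\gamma_\Lambda=\gamma_\Delta$ for $\Lambda\subset\Delta\Subset V$. It is quasilocal if for each $\Lambda\Subset V$ and every event $A\in\mathcal F_\Lambda$ the map $(\omega_1,\dots,\omega_q)\mapsto\gamma_\Lambda(A\mid\omega_1,\dots,\omega_q)$ is continuous on $\Omega^q$. *)

theory Defs
  imports "HOL-Probability.Probability"
begin

text \<open>Spin space Omega = Omega0^V with V = type 'v (countable), Omega0 = type 'a (finite).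
  q-tuples of configurations are functions 'q => ('v => 'a) with 'q a finite type,
  q = CARD('q).\<close>

definition Omega_M :: "('v \<Rightarrow> 'a) measure" where
  "Omega_M = PiM UNIV (\<lambda>_. count_space UNIV)"

definition F_sub :: "'v set \<Rightarrow> ('v \<Rightarrow> 'a) measure" where
  "F_sub \<Delta> = sigma UNIV {{\<sigma>. \<sigma> x = a} | x a. x \<in> \<Delta>}"

definition seq_conv :: "(nat \<Rightarrow> 'q \<Rightarrow> 'v \<Rightarrow> 'a) \<Rightarrow> ('q \<Rightarrow> 'v \<Rightarrow> 'a) \<Rightarrow> bool" where
  "seq_conv w w0 \<longleftrightarrow> (\<forall>i x. \<forall>\<^sub>F n in sequentially. w n i x = w0 i x)"

definition seq_continuous :: "(('q \<Rightarrow> 'v \<Rightarrow> 'a) \<Rightarrow> real) \<Rightarrow> bool" where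
  "seq_continuous f \<longleftrightarrow> (\<forall>w w0. seq_conv w w0 \<longrightarrow> (\<lambda>n. f (w n)) \<longlonglongrightarrow> f w0)"

definition prob_q_kernel :: "'v set \<Rightarrow> (('q \<Rightarrow> 'v \<Rightarrow> 'a) \<Rightarrow> ('v \<Rightarrow> 'a) measure) \<Rightarrow> bool" where
  "prob_q_kernel \<Lambda> k \<longleftrightarrow>
     (\<forall>\<eta>. prob_space (k \<eta>) \<and> sets (k \<eta>) = sets Omega_M) \<and>
     (\<forall>A \<in> sets Omega_M. (\<lambda>\<eta>. measure (k \<eta>) A) \<in> borel_measurable (PiM UNIV (\<lambda>_::'q. F_sub (- \<Lambda>))))"

definition proper_q_kernel :: "'v set \<Rightarrow> (('q::finite \<Rightarrow> 'v \<Rightarrow> 'a) \<Rightarrow> ('v \<Rightarrow> 'a) measure) \<Rightarrow> bool" where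
  "proper_q_kernel \<Lambda> k \<longleftrightarrow>
     (\<forall>A \<in> sets (F_sub (- \<Lambda>)). \<forall>\<eta>.
        measure (k \<eta>) A = (\<Sum>i\<in>UNIV. indicator A (\<eta> i)) / real CARD('q))"

definition q_specification ::
  "('v set \<Rightarrow> ('q::finite \<Rightarrow> 'v \<Rightarrow> 'a) \<Rightarrow> ('v \<Rightarrow> 'a) measure) \<Rightarrow> bool" where
  "q_specification \<gamma> \<longleftrightarrow>
     (\<forall>\<Lambda>. finite \<Lambda> \<longrightarrow> prob_q_kernel \<Lambda> (\<gamma> \<Lambda>) \<and> proper_q_kernel \<Lambda> (\<gamma> \<Lambda>)) \<and>
     (\<forall>\<Lambda> \<Delta>. \<Lambda> \<subseteq> \<Delta> \<and> finite \<Delta> \<longrightarrow>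
        (\<forall>A \<in> sets Omega_M. \<forall>\<eta>.
           (\<integral>\<zeta>. measure (\<gamma> \<Lambda> \<zeta>) A \<partial>(PiM UNIV (\<lambda>_. \<gamma> \<Delta> \<eta>))) = measure (\<gamma> \<Delta> \<eta>) A))"

definition quasilocal ::
  "('v set \<Rightarrow> ('q \<Rightarrow> 'v \<Rightarrow> 'a) \<Rightarrow> ('v \<Rightarrow> 'a) measure) \<Rightarrow> bool" where
  "quasilocal \<gamma> \<longleftrightarrow>
     (\<forall>\<Lambda>. finite \<Lambda> \<longrightarrow> (\<forall>A \<in> sets (F_sub \<Lambda>). seq_continuous (\<lambda>\<eta>. measure (\<gamma> \<Lambda> \<eta>) A)))"

end

theory Submission
  imports Defs "HOL-Library.Diagonal_Subsequence"
begin

(*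
  By quasilocality, \<gamma>\<^sub>\<Lambda>(A | \<eta>) depends continuously on \<eta> for A \<in> F_sub \<Lambda>. Consistency
  \<gamma>\<^sub>\<Lambda> \<gamma>\<^sub>\<Lambda> = \<gamma>\<^sub>\<Lambda> and properness force, for B \<in> F_sub (- \<Lambda>),

    \<gamma>\<^sub>\<Lambda>(A \<inter> B | \<eta>) = 1/q \<Sum>\<^sub>i 1\<^sub>B(\<eta>\<^sub>i) \<gamma>\<^sub>\<Lambda>(A | \<eta>\<^sub>i, \<dots>, \<eta>\<^sub>i):

  the difference of the two sides is a bounded harmonic function of \<eta> that only depends
  on \<eta> off \<Lambda> and vanishes on the diagonal, hence vanishes by a maximum principle.
  So \<gamma>\<^sub>\<Lambda>(C | \<eta>) is continuous in \<eta> for every cylinder event C on finitely many sites,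
  and therefore so is the integral of any local function g against \<gamma>\<^sub>\<Lambda>(\<cdot> | \<eta>)\<^sup>q. Finally \<Omega>\<^sup>q
  is sequentially compact, so a continuous f is a uniform limit of local functions, and
  continuity passes to the limit.
*)

section \<open>The \<sigma>-algebras F_sub \<Delta> and cylinder events\<close>

lemma space_Omega_M [simp]: "space (Omega_M :: ('v \<Rightarrow> 'a) measure) = UNIV"
  by (simp add: Omega_M_def space_PiM)

lemma space_F_sub [simp]: "space (F_sub D :: ('v \<Rightarrow> 'a) measure) = UNIV"
  by (simp add: F_sub_def space_measure_of_conv)

lemma sets_F_sub: "sets (F_sub D :: ('v \<Rightarrow> 'a) measure) = sigma_sets UNIV {{\<sigma>. \<sigma> x = a} | x a. x \<in> D}"
  unfolding F_sub_def by (rule sets_measure_of) auto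

lemma sets_F_sub_subset: "sets (F_sub D :: ('v \<Rightarrow> 'a) measure) \<subseteq> sets Omega_M"
proof -
  have "{\<sigma>::'v \<Rightarrow> 'a. \<sigma> x = a} \<in> sets Omega_M" for x a
  proof -
    have "(\<lambda>\<sigma>::'v \<Rightarrow> 'a. \<sigma> x) \<in> Omega_M \<rightarrow>\<^sub>M count_space UNIV"
      unfolding Omega_M_def by (rule measurable_component_singleton) simp
    from measurable_sets[OF this, of "{a}"] show ?thesis by (simp add: vimage_def)
  qed
  then have "{{\<sigma>::'v \<Rightarrow> 'a. \<sigma> x = a} | x a. x \<in> D} \<subseteq> sets Omega_M" by auto
  from sets.sigma_sets_subset[OF this] show ?thesis by (simp add: sets_F_sub)
qed

lemma F_sub_mem_cong:
  assumes "A \<in> sets (F_sub D)" and "\<forall>x\<in>D. \<sigma> x = \<sigma>' x"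
  shows "\<sigma> \<in> A \<longleftrightarrow> \<sigma>' \<in> A"
  using assms(1) unfolding sets_F_sub
  by (induction rule: sigma_sets.induct) (use assms(2) in auto)

lemma measurable_id_Omega_M_F_sub: "(\<lambda>\<sigma>. \<sigma>) \<in> Omega_M \<rightarrow>\<^sub>M F_sub D"
  by (rule measurableI) (use sets_F_sub_subset in auto)

lemma measurable_PiM_F_sub_imp_PiM_Omega_M:
  assumes "h \<in> borel_measurable (PiM UNIV (\<lambda>_::'q. F_sub D :: ('v \<Rightarrow> 'a) measure))"
  shows "h \<in> borel_measurable (PiM UNIV (\<lambda>_::'q. Omega_M :: ('v \<Rightarrow> 'a) measure))"
proof -
  have "(\<lambda>\<zeta>. \<zeta>) \<in> PiM UNIV (\<lambda>_::'q. Omega_M :: ('v \<Rightarrow> 'a) measure) \<rightarrow>\<^sub>M PiM UNIV (\<lambda>_. F_sub D)"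
  proof (rule measurable_PiM_single')
    fix i :: 'q
    show "(\<lambda>\<zeta>. \<zeta> i) \<in> PiM UNIV (\<lambda>_. Omega_M) \<rightarrow>\<^sub>M F_sub D"
      using measurable_component_singleton[OF UNIV_I] measurable_id_Omega_M_F_sub
      by (rule measurable_compose)
  qed (auto simp: space_PiM)
  from measurable_comp[OF this assms] show ?thesis by (simp add: o_def)
qed

lemma measurable_PiM_F_sub_cong:
  fixes h :: "('q \<Rightarrow> 'v \<Rightarrow> 'a) \<Rightarrow> real"
  assumes "h \<in> borel_measurable (PiM UNIV (\<lambda>_. F_sub D))" and "\<forall>i. \<forall>x\<in>D. \<zeta> i x = \<zeta>' i x"
  shows "h \<zeta> = h \<zeta>'"
proof -
  have mem_cong: "\<zeta> \<in> X \<longleftrightarrow> \<zeta>' \<in> X" if "X \<in> sets (PiM UNIV (\<lambda>_::'q. F_sub D :: ('v \<Rightarrow> 'a) measure))" for X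
    using that unfolding sets_PiM_single
  proof (induction rule: sigma_sets.induct)
    case (Basic X)
    then obtain i A where "X = {\<zeta>. \<zeta> i \<in> A}" "A \<in> sets (F_sub D)"
      by (auto simp: PiE_UNIV_domain)
    then show ?case using F_sub_mem_cong[of A D "\<zeta> i" "\<zeta>' i"] assms(2) by auto
  qed (auto simp: PiE_UNIV_domain)
  have "h -` {h \<zeta>'} \<in> sets (PiM UNIV (\<lambda>_. F_sub D))"
    using measurable_sets[OF assms(1), of "{h \<zeta>'}"] by (simp add: space_PiM PiE_UNIV_domain)
  from mem_cong[OF this] show ?thesis by simp
qed

definition cyl :: "'v set \<Rightarrow> ('v \<Rightarrow> 'a) \<Rightarrow> ('v \<Rightarrow> 'a) set" where
  "cyl W \<xi> = {\<sigma>. \<forall>x\<in>W. \<sigma> x = \<xi> x}"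

lemma cyl_in_F_sub:
  fixes \<xi> :: "'v::countable \<Rightarrow> 'a"
  assumes "W \<subseteq> D"
  shows "cyl W \<xi> \<in> sets (F_sub D)"
proof -
  have "cyl W \<xi> = (\<Inter>x\<in>W. {\<sigma>. \<sigma> x = \<xi> x})" by (auto simp: cyl_def)
  also have "\<dots> \<in> sets (F_sub D)"
    using assms sets.top[of "F_sub D"]
    by (intro sets.countable_INT'') (auto simp: sets_F_sub)
  finally show ?thesis .
qed

lemma cyl_in_Omega_M: "cyl W (\<xi> :: 'v::countable \<Rightarrow> 'a) \<in> sets Omega_M"
  using cyl_in_F_sub[of W UNIV \<xi>] sets_F_sub_subset by blast

section \<open>Uniform approximation by local functions\<close>

lemma seq_continuous_uniform_limit:
  fixes F :: "('q \<Rightarrow> 'v \<Rightarrow> 'a) \<Rightarrow> real"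
  assumes approx: "\<And>\<epsilon>. 0 < \<epsilon> \<Longrightarrow> \<exists>g. seq_continuous g \<and> (\<forall>\<eta>. \<bar>F \<eta> - g \<eta>\<bar> \<le> \<epsilon>)"
  shows "seq_continuous F"
  unfolding seq_continuous_def
proof (intro allI impI LIMSEQ_I)
  fix ws :: "nat \<Rightarrow> 'q \<Rightarrow> 'v \<Rightarrow> 'a" and w and e :: real
  assume conv: "seq_conv ws w" and "0 < e"
  then obtain g where g: "seq_continuous g" and g_close: "\<And>\<eta>. \<bar>F \<eta> - g \<eta>\<bar> \<le> e / 3"
    using approx[of "e / 3"] by auto
  have "(\<lambda>n. g (ws n)) \<longlonglongrightarrow> g w"
    using g conv by (simp add: seq_continuous_def)
  then obtain n\<^sub>0 where n\<^sub>0: "\<And>n. n \<ge> n\<^sub>0 \<Longrightarrow> \<bar>g (ws n) - g w\<bar> < e / 3"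
    using LIMSEQ_D[of _ "g w" "e / 3"] \<open>0 < e\<close> by auto
  have "\<bar>F (ws n) - F w\<bar> < e" if "n \<ge> n\<^sub>0" for n
    using n\<^sub>0[OF that] g_close[of "ws n"] g_close[of w] by linarith
  then show "\<exists>n\<^sub>0. \<forall>n\<ge>n\<^sub>0. norm (F (ws n) - F w) < e"
    by auto
qed

(* Diagonal argument: enumerate the coordinates (j, x) by from_nat and make them eventually
   constant one after the other; each takes values in the finite type 'a. *)
lemma seq_conv_convergent_subseq:
  fixes s :: "nat \<Rightarrow> 'q::countable \<Rightarrow> 'v::countable \<Rightarrow> 'a::finite"
  shows "\<exists>r \<sigma>. strict_mono r \<and> seq_conv (s \<circ> r) \<sigma>"
proof -
  define coord :: "nat \<Rightarrow> 'q \<times> 'v" where "coord = from_nat"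
  define P where "P k r \<longleftrightarrow> (\<exists>a. \<forall>n. s (r n) (fst (coord k)) (snd (coord k)) = a)"
    for k and r :: "nat \<Rightarrow> nat"
  interpret subseqs P
  proof
    fix k and r :: "nat \<Rightarrow> nat"
    define u where "u n = s (r n) (fst (coord k)) (snd (coord k))" for n
    obtain a where "infinite (u -` {a})"
      using inf_img_fin_domE[of u UNIV] by auto
    then obtain r' :: "nat \<Rightarrow> nat" where "strict_mono r'" "\<And>n. r' n \<in> u -` {a}"
      using infinite_enumerate by blast
    then show "\<exists>r'. strict_mono r' \<and> P k (r \<circ> r')"
      unfolding P_def u_def by (intro exI[of _ r']) auto
  qed
  have "P k (diagseq \<circ> (+) (Suc k))" for k
    by (rule diagseq_holds) (auto simp: P_def)
  then have "\<forall>k. \<exists>a. \<forall>n. s (diagseq (Suc k + n)) (fst (coord k)) (snd (coord k)) = a"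
    by (simp add: P_def)
  then obtain a where a: "\<And>k n. s (diagseq (Suc k + n)) (fst (coord k)) (snd (coord k)) = a k"
    by metis
  have "seq_conv (s \<circ> diagseq) (\<lambda>j x. a (to_nat (j, x)))"
    unfolding seq_conv_def eventually_sequentially
  proof (intro allI exI impI)
    fix j :: 'q and x :: 'v and n
    assume "Suc (to_nat (j, x)) \<le> n"
    then show "(s \<circ> diagseq) n j x = a (to_nat (j, x))"
      using a[of "to_nat (j, x)" "n - Suc (to_nat (j, x))"] by (simp add: coord_def)
  qed
  then show ?thesis
    using subseq_diagseq by blast
qed

(* Sites beyond the first N in the enumeration to_nat of V are set to the junk value
   undefined, so that trunc N has finite range. *)
definition trunc :: "nat \<Rightarrow> ('q \<Rightarrow> 'v::countable \<Rightarrow> 'a) \<Rightarrow> 'q \<Rightarrow> 'v \<Rightarrow> 'a" where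
  "trunc N \<sigma> = (\<lambda>j x. if to_nat x < N then \<sigma> j x else undefined)"

lemma finite_to_nat_less: "finite {x::'v::countable. to_nat x < N}"
  using finite_vimageI[of "{..<N}" "to_nat :: 'v \<Rightarrow> nat"] by (simp add: vimage_def)

lemma finite_range_trunc:
  "finite (range (trunc N :: ('q::finite \<Rightarrow> 'v::countable \<Rightarrow> 'a::finite) \<Rightarrow> _))"
proof -
  define W where "W = {x::'v. to_nat x < N}"
  define extend :: "('q \<times> 'v \<Rightarrow> 'a) \<Rightarrow> 'q \<Rightarrow> 'v \<Rightarrow> 'a" where
    "extend h = (\<lambda>j x. if to_nat x < N then h (j, x) else undefined)" for h
  have "range (trunc N) \<subseteq> extend ` PiE (UNIV \<times> W) (\<lambda>_. UNIV)"
  proof safe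
    fix \<sigma> :: "'q \<Rightarrow> 'v \<Rightarrow> 'a"
    have "trunc N \<sigma> = extend (restrict (\<lambda>(j, x). \<sigma> j x) (UNIV \<times> W))"
      by (auto simp: trunc_def extend_def W_def fun_eq_iff)
    then show "trunc N \<sigma> \<in> extend ` PiE (UNIV \<times> W) (\<lambda>_. UNIV)"
      by auto
  qed
  moreover have "finite (PiE ((UNIV :: 'q set) \<times> W) (\<lambda>_. UNIV :: 'a set))"
    by (intro finite_PiE finite_SigmaI) (simp_all add: W_def finite_to_nat_less)
  ultimately show ?thesis
    using finite_subset by blast
qed

lemma trunc_eq_iff:
  assumes "\<tau> \<in> range (trunc N)"
  shows "trunc N \<sigma> = \<tau> \<longleftrightarrow> \<sigma> \<in> Pi UNIV (\<lambda>j. cyl {x. to_nat x < N} (\<tau> j))"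
  using assms by (auto simp: trunc_def cyl_def fun_eq_iff)

lemma comp_trunc_eq_sum:
  fixes f :: "('q::finite \<Rightarrow> 'v::countable \<Rightarrow> 'a::finite) \<Rightarrow> real"
  shows "f (trunc N \<sigma>)
    = (\<Sum>\<tau>\<in>range (trunc N). f \<tau> * indicator (Pi UNIV (\<lambda>j. cyl {x. to_nat x < N} (\<tau> j))) \<sigma>)"
proof -
  have "(\<Sum>\<tau>\<in>range (trunc N). f \<tau> * indicator (Pi UNIV (\<lambda>j. cyl {x. to_nat x < N} (\<tau> j))) \<sigma>)
      = (\<Sum>\<tau>\<in>range (trunc N). if trunc N \<sigma> = \<tau> then f \<tau> else 0)"
    by (intro sum.cong refl) (simp add: trunc_eq_iff indicator_def)
  also have "\<dots> = f (trunc N \<sigma>)"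
    by (simp add: finite_range_trunc)
  finally show ?thesis ..
qed

lemma Pi_cyl_in_sets_PiM:
  "Pi UNIV (\<lambda>j. cyl W (\<tau> j)) \<in> sets (PiM UNIV (\<lambda>_::'q::finite. Omega_M :: ('v::countable \<Rightarrow> 'a) measure))"
  using sets_PiM_I_finite[of UNIV "\<lambda>j. cyl W (\<tau> j)" "\<lambda>_::'q. Omega_M :: ('v \<Rightarrow> 'a) measure"]
  by (simp add: PiE_UNIV_domain cyl_in_Omega_M)

lemma measurable_comp_trunc:
  fixes f :: "('q::finite \<Rightarrow> 'v::countable \<Rightarrow> 'a::finite) \<Rightarrow> real"
  shows "(\<lambda>\<sigma>. f (trunc N \<sigma>)) \<in> borel_measurable (PiM UNIV (\<lambda>_. Omega_M))"
  by (subst comp_trunc_eq_sum)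
    (intro borel_measurable_sum borel_measurable_times borel_measurable_const
      borel_measurable_indicator Pi_cyl_in_sets_PiM)

lemma seq_conv_trunc: "seq_conv (\<lambda>N. trunc N \<sigma>) \<sigma>"
  unfolding seq_conv_def
proof (intro allI)
  fix j x
  show "\<forall>\<^sub>F N in sequentially. trunc N \<sigma> j x = \<sigma> j x"
    using eventually_gt_at_top[of "to_nat x"] by eventually_elim (simp add: trunc_def)
qed

lemma seq_continuous_trunc_approx:
  fixes f :: "('q::countable \<Rightarrow> 'v::countable \<Rightarrow> 'a::finite) \<Rightarrow> real"
  assumes f: "seq_continuous f" and "0 < \<epsilon>"
  shows "\<exists>N. \<forall>\<sigma>. \<bar>f \<sigma> - f (trunc N \<sigma>)\<bar> \<le> \<epsilon>"
proof (rule ccontr)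
  assume "\<not> ?thesis"
  then obtain S where S: "\<And>N. \<epsilon> < \<bar>f (S N) - f (trunc N (S N))\<bar>"
    by (metis not_le)
  obtain r \<sigma> where r: "strict_mono r" and conv: "seq_conv (S \<circ> r) \<sigma>"
    using seq_conv_convergent_subseq by blast
  \<comment> \<open>Since \<open>r n \<ge> n\<close>, the truncations converge to the same limit.\<close>
  have conv_trunc: "seq_conv (\<lambda>n. trunc (r n) (S (r n))) \<sigma>"
    unfolding seq_conv_def
  proof (intro allI)
    fix j x
    have "\<forall>\<^sub>F n in sequentially. S (r n) j x = \<sigma> j x"
      using conv by (simp add: seq_conv_def)
    then show "\<forall>\<^sub>F n in sequentially. trunc (r n) (S (r n)) j x = \<sigma> j x"
      using eventually_gt_at_top[of "to_nat x"]
    proof eventually_elim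
      case (elim n)
      then show ?case
        using seq_suble[OF r, of n] by (simp add: trunc_def)
    qed
  qed
  have "(\<lambda>n. f (S (r n)) - f (trunc (r n) (S (r n)))) \<longlonglongrightarrow> f \<sigma> - f \<sigma>"
    using f conv conv_trunc unfolding seq_continuous_def comp_def by (intro tendsto_diff) blast+
  then obtain n where "\<bar>f (S (r n)) - f (trunc (r n) (S (r n)))\<bar> < \<epsilon>"
    using LIMSEQ_D[of _ 0 \<epsilon>] \<open>0 < \<epsilon>\<close> by fastforce
  then show False
    using S[of "r n"] by simp
qed

lemma seq_continuous_measurable:
  fixes f :: "('q::finite \<Rightarrow> 'v::countable \<Rightarrow> 'a::finite) \<Rightarrow> real"
  assumes "seq_continuous f"
  shows "f \<in> borel_measurable (PiM UNIV (\<lambda>_. Omega_M))"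
proof (rule borel_measurable_LIMSEQ_real)
  show "(\<lambda>N. f (trunc N \<sigma>)) \<longlonglongrightarrow> f \<sigma>" for \<sigma>
    using assms seq_conv_trunc unfolding seq_continuous_def by blast
qed (rule measurable_comp_trunc)

lemma seq_continuous_bounded:
  fixes f :: "('q::finite \<Rightarrow> 'v::countable \<Rightarrow> 'a::finite) \<Rightarrow> real"
  assumes "seq_continuous f"
  obtains B where "\<And>\<sigma>. \<bar>f \<sigma>\<bar> \<le> B"
proof -
  obtain N where N: "\<And>\<sigma>. \<bar>f \<sigma> - f (trunc N \<sigma>)\<bar> \<le> 1"
    using seq_continuous_trunc_approx[OF assms, of 1] by auto
  define B where "B = Max ((\<lambda>\<tau>. \<bar>f \<tau>\<bar>) ` range (trunc N))"
  have B: "\<bar>f (trunc N \<sigma>)\<bar> \<le> B" for \<sigma>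
    unfolding B_def by (rule Max_ge) (auto simp: finite_range_trunc)
  have "\<bar>f \<sigma>\<bar> \<le> B + 1" for \<sigma>
    using N[of \<sigma>] B[of \<sigma>] by linarith
  then show ?thesis
    using that by blast
qed

lemma (in prob_space) abs_integral_diff_le:
  fixes f g :: "'a \<Rightarrow> real"
  assumes "integrable M f" and "integrable M g" and "\<And>x. x \<in> space M \<Longrightarrow> \<bar>f x - g x\<bar> \<le> \<epsilon>"
  shows "\<bar>(\<integral>x. f x \<partial>M) - (\<integral>x. g x \<partial>M)\<bar> \<le> \<epsilon>"
proof -
  have "\<bar>\<integral>x. f x - g x \<partial>M\<bar> \<le> (\<integral>x. \<bar>f x - g x\<bar> \<partial>M)"
    by (rule integral_abs_bound)
  also have "\<dots> \<le> (\<integral>x. \<epsilon> \<partial>M)"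
    using assms by (intro integral_mono) auto
  finally show ?thesis
    using assms by (simp add: prob_space)
qed

lemma (in prob_space) integral_less_of_AE_le_indicator_compl:
  fixes h :: "'a \<Rightarrow> real"
  assumes "integrable M h" and R: "R \<in> events" and "0 < prob R" and "0 < c"
    and "AE x in M. h x \<le> c * indicator (space M - R) x"
  shows "(\<integral>x. h x \<partial>M) < c"
proof -
  have "(\<integral>x. h x \<partial>M) \<le> (\<integral>x. c * indicator (space M - R) x \<partial>M)"
    using assms by (intro integral_mono_AE integrable_mult_right integrable_real_indicator)
      (auto simp: emeasure_eq_measure)
  also have "\<dots> = c * (1 - prob R)"
    using prob_compl[OF R] by (simp add: Int_absorb2)
  also have "\<dots> < c"
    using assms by (simp add: algebra_simps)
  finally show ?thesis .
qed

section \<open>The kernels of a q-specification\<close>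

locale q_spec_volume =
  fixes \<gamma> :: "'v::countable set \<Rightarrow> ('q::finite \<Rightarrow> 'v \<Rightarrow> 'a::finite) \<Rightarrow> ('v \<Rightarrow> 'a) measure"
    and \<Lambda> :: "'v set"
  assumes q_spec: "q_specification \<gamma>" and finite_\<Lambda>: "finite \<Lambda>"
begin

abbreviation \<mu> :: "('q \<Rightarrow> 'v \<Rightarrow> 'a) \<Rightarrow> ('v \<Rightarrow> 'a) measure" where
  "\<mu> \<equiv> \<gamma> \<Lambda>"

abbreviation \<mu>\<^sub>q :: "('q \<Rightarrow> 'v \<Rightarrow> 'a) \<Rightarrow> ('q \<Rightarrow> 'v \<Rightarrow> 'a) measure" where
  "\<mu>\<^sub>q \<eta> \<equiv> PiM UNIV (\<lambda>_. \<mu> \<eta>)"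

lemma prob_space_kernel [simp]: "prob_space (\<mu> \<eta>)"
  and sets_kernel [simp]: "sets (\<mu> \<eta>) = sets Omega_M"
  using q_spec finite_\<Lambda> unfolding q_specification_def prob_q_kernel_def by auto

lemma space_kernel [simp]: "space (\<mu> \<eta>) = UNIV"
  using sets_eq_imp_space_eq[OF sets_kernel] by simp

lemma kernel_measurable:
  "A \<in> sets Omega_M \<Longrightarrow> (\<lambda>\<eta>. measure (\<mu> \<eta>) A) \<in> borel_measurable (PiM UNIV (\<lambda>_::'q. F_sub (- \<Lambda>)))"
  using q_spec finite_\<Lambda> unfolding q_specification_def prob_q_kernel_def by auto

lemma kernel_proper:
  "B \<in> sets (F_sub (- \<Lambda>)) \<Longrightarrow> measure (\<mu> \<eta>) B = (\<Sum>i\<in>UNIV. indicator B (\<eta> i)) / CARD('q)"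
  using q_spec finite_\<Lambda> unfolding q_specification_def proper_q_kernel_def by auto

lemma kernel_consistent:
  "A \<in> sets Omega_M \<Longrightarrow> (\<integral>\<zeta>. measure (\<mu> \<zeta>) A \<partial>\<mu>\<^sub>q \<eta>) = measure (\<mu> \<eta>) A"
  using q_spec finite_\<Lambda> unfolding q_specification_def by auto

lemma prob_space_kernel_power [simp]: "prob_space (\<mu>\<^sub>q \<eta>)"
  by (rule prob_space_PiM) simp

lemma space_kernel_power [simp]: "space (\<mu>\<^sub>q \<eta>) = UNIV"
  by (simp add: space_PiM PiE_UNIV_domain)

lemma sets_kernel_power: "sets (\<mu>\<^sub>q \<eta>) = sets (PiM UNIV (\<lambda>_::'q. Omega_M))"
  by (rule sets_PiM_cong) auto

lemma measurable_kernel_power: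
  "h \<in> borel_measurable (PiM UNIV (\<lambda>_::'q. Omega_M)) \<Longrightarrow> h \<in> borel_measurable (\<mu>\<^sub>q \<eta>)"
  by (simp add: measurable_cong_sets[OF sets_kernel_power refl])

lemma integrable_kernel_power:
  fixes h :: "('q \<Rightarrow> 'v \<Rightarrow> 'a) \<Rightarrow> real"
  assumes "h \<in> borel_measurable (PiM UNIV (\<lambda>_. Omega_M))" and "\<And>\<zeta>. \<bar>h \<zeta>\<bar> \<le> B"
  shows "integrable (\<mu>\<^sub>q \<eta>) h"
proof -
  interpret power: prob_space "\<mu>\<^sub>q \<eta>" by simp
  show ?thesis
    using assms measurable_kernel_power by (intro power.integrable_const_bound[of _ B]) auto
qed

lemma measure_kernel_power_Pi:
  assumes "\<And>j. A j \<in> sets Omega_M"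
  shows "measure (\<mu>\<^sub>q \<eta>) (Pi UNIV A) = (\<Prod>j\<in>UNIV. measure (\<mu> \<eta>) (A j))"
proof -
  interpret product_prob_space "\<lambda>_::'q. \<mu> \<eta>" UNIV
    by (intro product_prob_spaceI) simp
  have "measure (\<mu>\<^sub>q \<eta>) (prod_emb UNIV (\<lambda>_. \<mu> \<eta>) UNIV (Pi\<^sub>E UNIV A)) = (\<Prod>j\<in>UNIV. measure (\<mu> \<eta>) (A j))"
    by (rule measure_PiM_emb) (use assms in auto)
  moreover have "prod_emb UNIV (\<lambda>_. \<mu> \<eta>) UNIV (Pi\<^sub>E UNIV A) = Pi UNIV A"
    by (subst prod_emb_id) (auto simp: PiE_UNIV_domain)
  ultimately show ?thesis by simp
qed

lemma integral_kernel_power_component: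
  fixes g :: "('v \<Rightarrow> 'a) \<Rightarrow> real"
  assumes "g \<in> borel_measurable Omega_M"
  shows "(\<integral>\<zeta>. g (\<zeta> i) \<partial>\<mu>\<^sub>q \<eta>) = (\<integral>\<sigma>. g \<sigma> \<partial>\<mu> \<eta>)"
proof -
  have g: "g \<in> borel_measurable (\<mu> \<eta>)"
    using assms by (simp add: measurable_cong_sets[OF sets_kernel refl])
  have component: "(\<lambda>\<zeta>. \<zeta> i) \<in> \<mu>\<^sub>q \<eta> \<rightarrow>\<^sub>M \<mu> \<eta>"
    by (rule measurable_component_singleton) simp
  show ?thesis
    using integral_distr[OF component g] distr_PiM_component[of UNIV "\<lambda>_::'q. \<mu> \<eta>" i] by simp
qed

(* By properness, \<mu> \<eta> agrees on F_sub (- \<Lambda>) with the empirical distribution of the \<eta> i. *)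
lemma integral_kernel_exterior:
  fixes g :: "('v \<Rightarrow> 'a) \<Rightarrow> real"
  assumes g: "g \<in> borel_measurable (F_sub (- \<Lambda>))"
  shows "(\<integral>\<sigma>. g \<sigma> \<partial>\<mu> \<eta>) = (\<Sum>i\<in>UNIV. g (\<eta> i)) / CARD('q)"
proof -
  let ?F = "F_sub (- \<Lambda>) :: ('v \<Rightarrow> 'a) measure"
  let ?P = "measure_pmf (map_pmf \<eta> (pmf_of_set UNIV))"
  interpret kernel: prob_space "\<mu> \<eta>" by simp
  have sub_\<mu>: "subalgebra (\<mu> \<eta>) ?F"
    unfolding subalgebra_def using sets_F_sub_subset by auto
  have sub_P: "subalgebra ?P ?F"
    unfolding subalgebra_def by auto
  have "restr_to_subalg (\<mu> \<eta>) ?F = restr_to_subalg ?P ?F"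
  proof (rule measure_eqI)
    show "sets (restr_to_subalg (\<mu> \<eta>) ?F) = sets (restr_to_subalg ?P ?F)"
      by (simp add: sets_restr_to_subalg sub_\<mu> sub_P)
    fix B assume "B \<in> sets (restr_to_subalg (\<mu> \<eta>) ?F)"
    then have B: "B \<in> sets ?F" by (simp add: sets_restr_to_subalg sub_\<mu>)
    have "(\<Sum>i\<in>UNIV. indicator B (\<eta> i) :: real) = card (\<eta> -` B)"
      using sum_indicator_eq_card[of UNIV "\<eta> -` B"] by (simp add: indicator_def)
    then have "measure (\<mu> \<eta>) B = measure ?P B"
      by (simp add: kernel_proper[OF B] measure_pmf_of_set)
    then show "emeasure (restr_to_subalg (\<mu> \<eta>) ?F) B = emeasure (restr_to_subalg ?P ?F) B"
      by (simp add: emeasure_restr_to_subalg sub_\<mu> sub_P B kernel.emeasure_eq_measure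
          measure_pmf.emeasure_eq_measure)
  qed
  then have "(\<integral>\<sigma>. g \<sigma> \<partial>\<mu> \<eta>) = (\<integral>\<sigma>. g \<sigma> \<partial>?P)"
    using integral_subalgebra2[OF sub_\<mu> g] integral_subalgebra2[OF sub_P g] by simp
  also have "\<dots> = (\<Sum>i\<in>UNIV. g (\<eta> i)) / CARD('q)"
    by (simp add: integral_pmf_of_set)
  finally show ?thesis .
qed

lemma integral_kernel_power_exterior_average:
  fixes g :: "('v \<Rightarrow> 'a) \<Rightarrow> real"
  assumes g: "g \<in> borel_measurable (F_sub (- \<Lambda>))" and bounded: "\<And>\<sigma>. \<bar>g \<sigma>\<bar> \<le> C"
  shows "(\<integral>\<zeta>. (\<Sum>i\<in>UNIV. g (\<zeta> i)) / CARD('q) \<partial>\<mu>\<^sub>q \<eta>) = (\<Sum>i\<in>UNIV. g (\<eta> i)) / CARD('q)"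
proof -
  have g': "g \<in> borel_measurable Omega_M"
    using measurable_id_Omega_M_F_sub g by (rule measurable_compose)
  have "integrable (\<mu>\<^sub>q \<eta>) (\<lambda>\<zeta>. g (\<zeta> i))" for i
  proof (rule integrable_kernel_power[of _ C])
    show "(\<lambda>\<zeta>. g (\<zeta> i)) \<in> borel_measurable (PiM UNIV (\<lambda>_. Omega_M))"
      by (rule measurable_PiM_component_rev) (simp_all add: g')
  qed (rule bounded)
  then have "(\<integral>\<zeta>. (\<Sum>i\<in>UNIV. g (\<zeta> i)) / CARD('q) \<partial>\<mu>\<^sub>q \<eta>)
      = (\<Sum>i\<in>UNIV. \<integral>\<zeta>. g (\<zeta> i) \<partial>\<mu>\<^sub>q \<eta>) / CARD('q)"
    by (simp add: Bochner_Integration.integral_sum)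
  also have "\<dots> = (\<Sum>i\<in>(UNIV::'q set). \<integral>\<sigma>. g \<sigma> \<partial>\<mu> \<eta>) / CARD('q)"
    by (simp add: integral_kernel_power_component[OF g'])
  also have "\<dots> = (\<Sum>i\<in>UNIV. g (\<eta> i)) / CARD('q)"
    by (simp add: integral_kernel_exterior[OF g])
  finally show ?thesis .
qed

lemma AE_kernel_exterior_classes: "AE \<sigma> in \<mu> \<eta>. \<exists>i. \<sigma> \<in> cyl (- \<Lambda>) (\<eta> i)"
proof -
  interpret kernel: prob_space "\<mu> \<eta>" by simp
  define U where "U = (\<Union>i. cyl (- \<Lambda>) (\<eta> i))"
  have U: "U \<in> sets (F_sub (- \<Lambda>))"
    unfolding U_def by (intro sets.countable_UN'' cyl_in_F_sub) auto
  have "(\<Sum>i\<in>UNIV. indicator U (\<eta> i)) = (\<Sum>i\<in>(UNIV::'q set). 1::real)"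
    by (intro sum.cong) (auto simp: U_def cyl_def indicator_def)
  then have "measure (\<mu> \<eta>) U = 1"
    by (simp add: kernel_proper[OF U])
  then have "AE \<sigma> in \<mu> \<eta>. \<sigma> \<in> U"
    using kernel.prob_eq_1[of U] U sets_F_sub_subset by auto
  then show ?thesis
    by (simp add: U_def)
qed

lemma measure_kernel_exterior_class_pos: "0 < measure (\<mu> \<eta>) (cyl (- \<Lambda>) (\<eta> i))"
proof -
  have "(1::real) \<le> (\<Sum>k\<in>UNIV. indicator (cyl (- \<Lambda>) (\<eta> i)) (\<eta> k))"
    using member_le_sum[of i UNIV "\<lambda>k. indicator (cyl (- \<Lambda>) (\<eta> i)) (\<eta> k) :: real"]
    by (simp add: cyl_def)
  then show ?thesis
    by (simp add: kernel_proper cyl_in_F_sub)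
qed

lemma AE_kernel_power_exterior_classes:
  "AE \<zeta> in \<mu>\<^sub>q \<eta>. \<forall>j. \<exists>i. \<zeta> j \<in> cyl (- \<Lambda>) (\<eta> i)"
proof -
  have "AE \<zeta> in \<mu>\<^sub>q \<eta>. \<exists>i. \<zeta> j \<in> cyl (- \<Lambda>) (\<eta> i)" for j
    using AE_PiM_component[of UNIV "\<lambda>_. \<mu> \<eta>" j "\<lambda>\<sigma>. \<exists>i. \<sigma> \<in> cyl (- \<Lambda>) (\<eta> i)"]
      AE_kernel_exterior_classes
    by simp
  then have "AE \<zeta> in \<mu>\<^sub>q \<eta>. \<forall>j\<in>UNIV. \<exists>i. \<zeta> j \<in> cyl (- \<Lambda>) (\<eta> i)"
    by (intro AE_finite_allI) auto
  then show ?thesis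
    by simp
qed

lemma measure_kernel_power_exterior_class_pos:
  "0 < measure (\<mu>\<^sub>q \<eta>) (Pi UNIV (\<lambda>_. cyl (- \<Lambda>) (\<eta> k)))"
  by (simp add: measure_kernel_power_Pi cyl_in_Omega_M measure_kernel_exterior_class_pos prod_pos)

(* Let \<xi> = \<eta> \<circ> t\<^sub>0 maximise h among the finitely many tuples \<eta> \<circ> t. Almost surely under
   \<mu>\<^sub>q \<xi> each component of \<zeta> agrees off \<Lambda> with some \<xi> i, so h \<zeta> \<le> h \<xi>; with positive
   probability all of them agree off \<Lambda> with \<xi> k, and then h \<zeta> = 0. Harmonicity at \<xi>
   therefore rules out h \<xi> > 0. *)
lemma harmonic_nonpos:
  fixes h :: "('q \<Rightarrow> 'v \<Rightarrow> 'a) \<Rightarrow> real"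
  assumes h_meas: "h \<in> borel_measurable (PiM UNIV (\<lambda>_. F_sub (- \<Lambda>)))"
    and h_bounded: "\<And>\<zeta>. \<bar>h \<zeta>\<bar> \<le> B"
    and h_harmonic: "\<And>\<eta>. (\<integral>\<zeta>. h \<zeta> \<partial>\<mu>\<^sub>q \<eta>) = h \<eta>"
    and h_diagonal: "\<And>\<omega>. h (\<lambda>_. \<omega>) = 0"
  shows "h \<eta> \<le> 0"
proof (rule ccontr)
  assume "\<not> h \<eta> \<le> 0"
  define M where "M = Max (range (\<lambda>t::'q \<Rightarrow> 'q. h (\<eta> \<circ> t)))"
  have le_M: "h (\<eta> \<circ> t) \<le> M" for t
    unfolding M_def by (rule Max_ge) auto
  have "M \<in> range (\<lambda>t. h (\<eta> \<circ> t))"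
    unfolding M_def by (rule Max_in) auto
  then obtain t\<^sub>0 where t\<^sub>0: "h (\<eta> \<circ> t\<^sub>0) = M"
    by auto
  have "0 < M"
    using le_M[of id] \<open>\<not> h \<eta> \<le> 0\<close> by simp
  define \<xi> where "\<xi> = \<eta> \<circ> t\<^sub>0"
  fix k :: 'q
  define R where "R = Pi UNIV (\<lambda>_::'q. cyl (- \<Lambda>) (\<xi> k))"
  interpret power: prob_space "\<mu>\<^sub>q \<xi>" by simp
  have R: "R \<in> power.events"
    using sets_PiM_I_finite[of UNIV "\<lambda>_. cyl (- \<Lambda>) (\<xi> k)" "\<lambda>_::'q. \<mu> \<xi>"]
    by (simp add: R_def PiE_UNIV_domain cyl_in_Omega_M)
  have "0 < measure (\<mu>\<^sub>q \<xi>) R"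
    unfolding R_def by (rule measure_kernel_power_exterior_class_pos)
  have h_cong: "h \<zeta> = h \<zeta>'" if "\<forall>j. \<forall>x\<in>- \<Lambda>. \<zeta> j x = \<zeta>' j x" for \<zeta> \<zeta>'
    using measurable_PiM_F_sub_cong[OF h_meas that] .
  from AE_kernel_power_exterior_classes[of \<xi>]
  have h_le: "AE \<zeta> in \<mu>\<^sub>q \<xi>. h \<zeta> \<le> M * indicator (space (\<mu>\<^sub>q \<xi>) - R) \<zeta>"
  proof eventually_elim
    case (elim \<zeta>)
    then obtain t where t: "\<And>j. \<zeta> j \<in> cyl (- \<Lambda>) (\<xi> (t j))"
      by metis
    show ?case
    proof (cases "\<zeta> \<in> R")
      case True
      then have "h \<zeta> = h (\<lambda>_. \<xi> k)"
        by (intro h_cong) (auto simp: R_def cyl_def)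
      then show ?thesis using True h_diagonal by simp
    next
      case False
      from t have "h \<zeta> = h (\<eta> \<circ> (t\<^sub>0 \<circ> t))"
        by (intro h_cong) (auto simp: cyl_def \<xi>_def)
      then show ?thesis using le_M False by simp
    qed
  qed
  have "integrable (\<mu>\<^sub>q \<xi>) h"
    using measurable_PiM_F_sub_imp_PiM_Omega_M[OF h_meas] h_bounded by (rule integrable_kernel_power)
  then have "(\<integral>\<zeta>. h \<zeta> \<partial>\<mu>\<^sub>q \<xi>) < M"
    using R \<open>0 < measure (\<mu>\<^sub>q \<xi>) R\<close> \<open>0 < M\<close> h_le
    by (rule power.integral_less_of_AE_le_indicator_compl)
  then show False
    using t\<^sub>0 h_harmonic[of \<xi>] by (simp add: \<xi>_def)
qed

lemma harmonic_eq_0: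
  fixes h :: "('q \<Rightarrow> 'v \<Rightarrow> 'a) \<Rightarrow> real"
  assumes "h \<in> borel_measurable (PiM UNIV (\<lambda>_. F_sub (- \<Lambda>)))"
    and "\<And>\<zeta>. \<bar>h \<zeta>\<bar> \<le> B"
    and "\<And>\<eta>. (\<integral>\<zeta>. h \<zeta> \<partial>\<mu>\<^sub>q \<eta>) = h \<eta>"
    and "\<And>\<omega>. h (\<lambda>_. \<omega>) = 0"
  shows "h \<eta> = 0"
proof -
  have "h \<eta> \<le> 0"
    using assms by (rule harmonic_nonpos[of h B])
  moreover have "- h \<eta> \<le> 0"
    using assms by (intro harmonic_nonpos[where h = "\<lambda>\<zeta>. - h \<zeta>" and B = B]) auto
  ultimately show ?thesis by simp
qed

lemma measurable_diagonal_kernel: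
  assumes "A \<in> sets Omega_M"
  shows "(\<lambda>\<omega>. measure (\<mu> (\<lambda>_. \<omega>)) A) \<in> borel_measurable (F_sub (- \<Lambda>))"
proof -
  have "(\<lambda>\<omega>. \<lambda>_::'q. \<omega>) \<in> F_sub (- \<Lambda>) \<rightarrow>\<^sub>M PiM UNIV (\<lambda>_::'q. F_sub (- \<Lambda>) :: ('v \<Rightarrow> 'a) measure)"
    by (rule measurable_PiM_single') (auto simp: space_PiM)
  from measurable_compose[OF this kernel_measurable[OF assms]] show ?thesis .
qed

lemma measure_diagonal_kernel_inter_exterior:
  assumes A: "A \<in> sets Omega_M" and B: "B \<in> sets (F_sub (- \<Lambda>))"
  shows "measure (\<mu> (\<lambda>_. \<omega>)) (A \<inter> B) = indicator B \<omega> * measure (\<mu> (\<lambda>_. \<omega>)) A"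
proof -
  interpret kernel: prob_space "\<mu> (\<lambda>_. \<omega>)" by simp
  have B': "B \<in> sets Omega_M"
    using B sets_F_sub_subset by blast
  have "measure (\<mu> (\<lambda>_. \<omega>)) B = indicator B \<omega>"
    using kernel_proper[OF B, of "\<lambda>_. \<omega>"] by simp
  then show ?thesis
  proof (cases "\<omega> \<in> B")
    case True
    with \<open>measure (\<mu> (\<lambda>_. \<omega>)) B = indicator B \<omega>\<close> have "AE \<sigma> in \<mu> (\<lambda>_. \<omega>). \<sigma> \<in> B"
      using kernel.prob_eq_1[of B] B' by simp
    then have "measure (\<mu> (\<lambda>_. \<omega>)) (A \<inter> B) = measure (\<mu> (\<lambda>_. \<omega>)) A"
      using A B' by (intro kernel.finite_measure_eq_AE) auto
    then show ?thesis using True by simp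
  next
    case False
    with \<open>measure (\<mu> (\<lambda>_. \<omega>)) B = indicator B \<omega>\<close>
    have "measure (\<mu> (\<lambda>_. \<omega>)) (A \<inter> B) \<le> 0"
      using kernel.finite_measure_mono[of "A \<inter> B" B] B' by simp
    then show ?thesis
      using False measure_nonneg[of "\<mu> (\<lambda>_. \<omega>)" "A \<inter> B"] by simp
  qed
qed

lemma measure_kernel_inter_exterior:
  assumes A: "A \<in> sets Omega_M" and B: "B \<in> sets (F_sub (- \<Lambda>))"
  shows "measure (\<mu> \<eta>) (A \<inter> B)
    = (\<Sum>i\<in>UNIV. indicator B (\<eta> i) * measure (\<mu> (\<lambda>_. \<eta> i)) A) / CARD('q)"
proof -
  define g where "g \<sigma> = indicator B \<sigma> * measure (\<mu> (\<lambda>_. \<sigma>)) A" for \<sigma>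
  define avg where "avg \<zeta> = (\<Sum>i\<in>UNIV. g (\<zeta> i)) / CARD('q)" for \<zeta> :: "'q \<Rightarrow> 'v \<Rightarrow> 'a"
  define H where "H \<zeta> = measure (\<mu> \<zeta>) (A \<inter> B) - avg \<zeta>" for \<zeta>
  have AB: "A \<inter> B \<in> sets Omega_M"
    using A B sets_F_sub_subset by blast
  have g_meas: "g \<in> borel_measurable (F_sub (- \<Lambda>))"
    unfolding g_def using B measurable_diagonal_kernel[OF A] by measurable
  have g_bounds: "0 \<le> g \<sigma>" "g \<sigma> \<le> 1" for \<sigma>
    using prob_space.prob_le_1[OF prob_space_kernel] by (auto simp: g_def indicator_def)
  have avg_meas: "avg \<in> borel_measurable (PiM UNIV (\<lambda>_. F_sub (- \<Lambda>)))"
  proof -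
    have "(\<lambda>\<zeta>. g (\<zeta> i)) \<in> borel_measurable (PiM UNIV (\<lambda>_::'q. F_sub (- \<Lambda>)))" for i
      by (rule measurable_PiM_component_rev) (simp_all add: g_meas)
    then show ?thesis
      unfolding avg_def by (intro borel_measurable_divide borel_measurable_sum) auto
  qed
  have avg_bounds: "0 \<le> avg \<zeta>" "avg \<zeta> \<le> 1" for \<zeta>
  proof -
    show "0 \<le> avg \<zeta>"
      unfolding avg_def by (intro divide_nonneg_nonneg sum_nonneg g_bounds) simp
    have "(\<Sum>i\<in>UNIV. g (\<zeta> i)) \<le> (\<Sum>i\<in>(UNIV::'q set). 1)"
      by (intro sum_mono g_bounds)
    then show "avg \<zeta> \<le> 1"
      by (simp add: avg_def)
  qed
  have H_meas: "H \<in> borel_measurable (PiM UNIV (\<lambda>_. F_sub (- \<Lambda>)))"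
    unfolding H_def using kernel_measurable[OF AB] avg_meas by (rule borel_measurable_diff)
  have H_bounded: "\<bar>H \<zeta>\<bar> \<le> 1" for \<zeta>
    using avg_bounds[of \<zeta>] prob_space.prob_le_1[OF prob_space_kernel, of \<zeta> "A \<inter> B"]
      measure_nonneg[of "\<mu> \<zeta>" "A \<inter> B"]
    unfolding H_def by linarith
  have H_harmonic: "(\<integral>\<zeta>. H \<zeta> \<partial>\<mu>\<^sub>q \<eta>') = H \<eta>'" for \<eta>'
  proof -
    have "integrable (\<mu>\<^sub>q \<eta>') (\<lambda>\<zeta>. measure (\<mu> \<zeta>) (A \<inter> B))"
      using measurable_PiM_F_sub_imp_PiM_Omega_M[OF kernel_measurable[OF AB]]
        prob_space.prob_le_1[OF prob_space_kernel]
      by (intro integrable_kernel_power[of _ 1]) auto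
    moreover have "integrable (\<mu>\<^sub>q \<eta>') avg"
      using measurable_PiM_F_sub_imp_PiM_Omega_M[OF avg_meas] avg_bounds
      by (intro integrable_kernel_power[of _ 1]) auto
    moreover have "(\<integral>\<zeta>. avg \<zeta> \<partial>\<mu>\<^sub>q \<eta>') = avg \<eta>'"
      unfolding avg_def using g_meas g_bounds
      by (intro integral_kernel_power_exterior_average[of _ 1]) auto
    ultimately show ?thesis
      by (simp add: H_def kernel_consistent[OF AB])
  qed
  have H_diagonal: "H (\<lambda>_. \<omega>) = 0" for \<omega>
    by (simp add: H_def avg_def g_def measure_diagonal_kernel_inter_exterior[OF A B])
  have "H \<eta> = 0"
    using H_meas H_bounded H_harmonic H_diagonal by (rule harmonic_eq_0[of H 1])
  then show ?thesis
    by (simp add: H_def avg_def g_def)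
qed

lemma seq_continuous_kernel_cyl:
  assumes quasilocal: "quasilocal \<gamma>" and W: "finite W"
  shows "seq_continuous (\<lambda>\<eta>. measure (\<mu> \<eta>) (cyl W \<xi>))"
  unfolding seq_continuous_def
proof (intro allI impI)
  fix \<eta>s :: "nat \<Rightarrow> 'q \<Rightarrow> 'v \<Rightarrow> 'a" and \<eta> assume conv: "seq_conv \<eta>s \<eta>"
  define A where "A = cyl (W \<inter> \<Lambda>) \<xi>"
  define B where "B = cyl (W - \<Lambda>) \<xi>"
  have A: "A \<in> sets (F_sub \<Lambda>)" and B: "B \<in> sets (F_sub (- \<Lambda>))"
    unfolding A_def B_def by (auto intro: cyl_in_F_sub)
  have indicator_B: "(\<lambda>n. indicator B (\<eta>s n i) :: real) \<longlonglongrightarrow> indicator B (\<eta> i)" for i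
  proof (rule tendsto_eventually)
    have "\<forall>\<^sub>F n in sequentially. \<forall>x\<in>W. \<eta>s n i x = \<eta> i x"
      using conv W by (simp add: seq_conv_def eventually_ball_finite)
    then show "\<forall>\<^sub>F n in sequentially. (indicator B (\<eta>s n i) :: real) = indicator B (\<eta> i)"
      by eventually_elim (auto simp: B_def cyl_def indicator_def)
  qed
  have diagonal_A: "(\<lambda>n. measure (\<mu> (\<lambda>_. \<eta>s n i)) A) \<longlonglongrightarrow> measure (\<mu> (\<lambda>_. \<eta> i)) A" for i
  proof -
    have "seq_conv (\<lambda>n _. \<eta>s n i) (\<lambda>_. \<eta> i)"
      using conv by (simp add: seq_conv_def)
    with quasilocal A finite_\<Lambda> show ?thesis
      unfolding quasilocal_def seq_continuous_def by blast
  qed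
  have A': "A \<in> sets Omega_M"
    using A sets_F_sub_subset by blast
  have "(\<lambda>n. measure (\<mu> (\<eta>s n)) (A \<inter> B)) \<longlonglongrightarrow> measure (\<mu> \<eta>) (A \<inter> B)"
    unfolding measure_kernel_inter_exterior[OF A' B]
    by (intro tendsto_intros indicator_B diagonal_A) simp
  moreover have "cyl W \<xi> = A \<inter> B"
    by (auto simp: A_def B_def cyl_def)
  ultimately show "(\<lambda>n. measure (\<mu> (\<eta>s n)) (cyl W \<xi>)) \<longlonglongrightarrow> measure (\<mu> \<eta>) (cyl W \<xi>)"
    by simp
qed

lemma integral_comp_trunc:
  fixes f :: "('q \<Rightarrow> 'v \<Rightarrow> 'a) \<Rightarrow> real"
  shows "(\<integral>\<sigma>. f (trunc N \<sigma>) \<partial>\<mu>\<^sub>q \<eta>)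
    = (\<Sum>\<tau>\<in>range (trunc N). f \<tau> * (\<Prod>j\<in>UNIV. measure (\<mu> \<eta>) (cyl {x. to_nat x < N} (\<tau> j))))"
proof -
  interpret power: prob_space "\<mu>\<^sub>q \<eta>" by simp
  have cells: "Pi UNIV (\<lambda>j. cyl {x. to_nat x < N} (\<tau> j)) \<in> sets (\<mu>\<^sub>q \<eta>)" for \<tau>
    using Pi_cyl_in_sets_PiM sets_kernel_power by blast
  have "(\<integral>\<sigma>. f (trunc N \<sigma>) \<partial>\<mu>\<^sub>q \<eta>) = (\<integral>\<sigma>.
      (\<Sum>\<tau>\<in>range (trunc N). f \<tau> * indicator (Pi UNIV (\<lambda>j. cyl {x. to_nat x < N} (\<tau> j))) \<sigma>) \<partial>\<mu>\<^sub>q \<eta>)"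
    by (subst comp_trunc_eq_sum) (rule refl)
  also have "\<dots> = (\<Sum>\<tau>\<in>range (trunc N). f \<tau> * measure (\<mu>\<^sub>q \<eta>) (Pi UNIV (\<lambda>j. cyl {x. to_nat x < N} (\<tau> j))))"
    using cells
    by (subst Bochner_Integration.integral_sum)
      (auto simp: power.emeasure_eq_measure)
  also have "\<dots> = (\<Sum>\<tau>\<in>range (trunc N). f \<tau> * (\<Prod>j\<in>UNIV. measure (\<mu> \<eta>) (cyl {x. to_nat x < N} (\<tau> j))))"
    by (simp add: measure_kernel_power_Pi cyl_in_Omega_M)
  finally show ?thesis .
qed

lemma seq_continuous_integral_comp_trunc:
  fixes f :: "('q \<Rightarrow> 'v \<Rightarrow> 'a) \<Rightarrow> real"
  assumes "quasilocal \<gamma>"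
  shows "seq_continuous (\<lambda>\<eta>. \<integral>\<sigma>. f (trunc N \<sigma>) \<partial>\<mu>\<^sub>q \<eta>)"
  using seq_continuous_kernel_cyl[OF assms finite_to_nat_less]
  unfolding integral_comp_trunc seq_continuous_def
  by (intro allI impI tendsto_sum tendsto_mult tendsto_const tendsto_prod) blast

end

theorem mainTheorem4:
  fixes \<gamma> :: "'v::countable set \<Rightarrow> ('q::finite \<Rightarrow> 'v \<Rightarrow> 'a::finite) \<Rightarrow> ('v \<Rightarrow> 'a) measure"
    and f :: "('q \<Rightarrow> 'v \<Rightarrow> 'a) \<Rightarrow> real"
    and \<Lambda> :: "'v set"
  assumes "q_specification \<gamma>"
    and "quasilocal \<gamma>"
    and "seq_continuous f"
    and "finite \<Lambda>"
  shows "seq_continuous (\<lambda>\<eta>. \<integral>\<sigma>. f \<sigma> \<partial>(PiM UNIV (\<lambda>i. \<gamma> \<Lambda> \<eta>)))"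
proof -
  interpret q_spec_volume \<gamma> \<Lambda>
    using assms(1,4) by unfold_locales
  obtain B where B: "\<And>\<sigma>. \<bar>f \<sigma>\<bar> \<le> B"
    using seq_continuous_bounded[OF assms(3)] by blast
  note f_meas = seq_continuous_measurable[OF assms(3)]
  show ?thesis
  proof (rule seq_continuous_uniform_limit)
    fix \<epsilon> :: real
    assume "0 < \<epsilon>"
    then obtain N where N: "\<And>\<sigma>. \<bar>f \<sigma> - f (trunc N \<sigma>)\<bar> \<le> \<epsilon>"
      using seq_continuous_trunc_approx[OF assms(3)] by blast
    have "\<bar>(\<integral>\<sigma>. f \<sigma> \<partial>\<mu>\<^sub>q \<eta>) - (\<integral>\<sigma>. f (trunc N \<sigma>) \<partial>\<mu>\<^sub>q \<eta>)\<bar> \<le> \<epsilon>" for \<eta>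
      using B f_meas measurable_comp_trunc[of f N] N
      by (intro prob_space.abs_integral_diff_le integrable_kernel_power[of _ B]) auto
    then show "\<exists>g. seq_continuous g \<and> (\<forall>\<eta>. \<bar>(\<integral>\<sigma>. f \<sigma> \<partial>\<mu>\<^sub>q \<eta>) - g \<eta>\<bar> \<le> \<epsilon>)"
      using seq_continuous_integral_comp_trunc[OF assms(2)] by blast
  qed
qed

end
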